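(* For a prime $p\ge 5$ the following statements are equivalent: (i) $p$ is a Wolstenholme prime, i.e. $\binom{2p}{p}\equiv 2\pmod{p^4}$; (ii) for all nonnegative integers $n$ and $m$, $\binom{np}{mp}\equiv\binom{n}{m}\pmod{p^4}$; (iii) for all nonnegative integers $n,m,n_0,m_0$ with $n_0<p$ and $m_0<p$, $$\binom{np^4+n_0}{mp^4+m_0}\equiv\binom{n}{m}\binom{n_0}{m_0}\pmod{p^4}.$$
   Context: A prime $p$ is called a Wolstenholme prime if $\binom{2p-1}{p-1}\equiv 1\pmod{p^4}$, equivalently $\binom{2p}{p}\equiv 2\pmod{p^4}$. Binomial coefficients use the conventions $\binom{0}{0}=1$ and $\binom{l}{r}=0$ if $l<r$. *)

theory Defs
  imports "HOL-Number_Theory.Number_Theory"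
begin

end

theory Submission
  imports Defs
begin

text \<open>
  Put S(t) = prod_{j=1}^{p-1} (j + p t), so that (np)! = p^n n! S(0) S(1) ... S(n-1).
  Expanding S in powers of p and using the symmetry S(-1-t) = S(t) (and dividing by 6, which
  needs p >= 5) gives S(t) == (p-1)! (1 + c t(t+1)) mod p^4 with p^2 | c. As c^2 == 0, the product
  over k < n is (p-1)!^n (1 + c sum_{k<n} k(k+1)), and comparing (np)! with (mp)! ((n-m)p)! yields
    binom(np, mp) == binom(n, m) (1 + c m n (n-m))   (mod p^4)
  with c independent of n and m. For n = 2, m = 1 this reads binom(2p, p) == 2 + 4c, so p is a
  Wolstenholme prime iff p^4 | c, i.e. iff (ii) holds. Since p^2 | c, the correction term
  vanishes as soon as p divides n and m, so binom(np^4, mp^4) == binom(np, mp) unconditionally;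
  and Vandermonde's identity splits off the digits below p:
  binom(np^4 + n0, mp^4 + m0) == binom(np^4, mp^4) binom(n0, m0). Hence (iii) is equivalent to (ii).
\<close>

lemma coprime_one_plus_multiple:
  fixes c x m :: int
  assumes "m dvd c"
  shows "coprime (1 + c * x) m"
proof (rule coprimeI)
  fix d assume "d dvd 1 + c * x" "d dvd m"
  moreover have "d dvd c * x" using \<open>d dvd m\<close> assms by (simp add: dvd_mult2 dvd_trans)
  ultimately show "is_unit d" by (metis dvd_add_left_iff)
qed

lemma coprime_less_prime_power:
  assumes "prime p" "0 < k" "k < p"
  shows "coprime (int k) (int p ^ e)"
proof -
  have "\<not> p dvd k" using assms by (auto dest: dvd_imp_le)
  then show ?thesis
    using prime_imp_power_coprime_nat[OF assms(1)] by (metis coprime_int_iff of_nat_power)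
qed

lemma coprime_small_prime_power:
  assumes "prime p" "p \<ge> 5"
  shows "coprime 4 (int p ^ e)" "coprime 6 (int p ^ e)"
proof -
  have "coprime (int 2) (int p ^ e)" "coprime (int 3) (int p ^ e)"
    by (rule coprime_less_prime_power[OF assms(1)]; use assms(2) in simp)+
  then have "coprime (int 2 * int 2) (int p ^ e)" "coprime (int 2 * int 3) (int p ^ e)"
    by (simp_all only: coprime_mult_left_iff)
  moreover have "int 2 * int 2 = 4" "int 2 * int 3 = 6"
    by simp_all
  ultimately show "coprime 4 (int p ^ e)" "coprime 6 (int p ^ e)"
    by (simp_all only:)
qed

lemma cong_one_plus_mult:
  fixes c x y :: int
  assumes "M dvd c\<^sup>2"
  shows "[(1 + c * x) * (1 + c * y) = 1 + c * (x + y)] (mod M)"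
proof -
  have "(1 + c * x) * (1 + c * y) - (1 + c * (x + y)) = c\<^sup>2 * (x * y)"
    by (simp add: algebra_simps power2_eq_square)
  with assms show ?thesis
    by (simp add: cong_iff_dvd_diff)
qed

lemma cong_mult_one_plus_dvd:
  fixes a b w :: int
  assumes "M dvd b * w"
  shows "[a * (1 + b * w) = a] (mod M)"
proof -
  have "a * (1 + b * w) - a = a * (b * w)"
    by (simp add: algebra_simps)
  with assms show ?thesis
    by (simp add: cong_iff_dvd_diff)
qed

lemma cong_prod_one_plus:
  fixes c :: int and x :: "'a \<Rightarrow> int"
  assumes "M dvd c\<^sup>2" "finite K"
  shows "[(\<Prod>k\<in>K. 1 + c * x k) = 1 + c * (\<Sum>k\<in>K. x k)] (mod M)"
  using assms(2)
proof (induction K rule: finite_induct)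
  case empty
  show ?case by simp
next
  case (insert a K)
  have "(\<Prod>k\<in>insert a K. 1 + c * x k) = (1 + c * x a) * (\<Prod>k\<in>K. 1 + c * x k)"
    using insert.hyps by simp
  also have "[\<dots> = (1 + c * x a) * (1 + c * (\<Sum>k\<in>K. x k))] (mod M)"
    using insert.IH by (rule cong_scalar_left)
  also have "[(1 + c * x a) * (1 + c * (\<Sum>k\<in>K. x k))
      = 1 + c * (x a + (\<Sum>k\<in>K. x k))] (mod M)"
    using assms(1) by (rule cong_one_plus_mult)
  finally show ?case
    using insert.hyps by simp
qed

definition pronic_sum :: "nat \<Rightarrow> nat" where
  "pronic_sum n = (\<Sum>k<n. k * (k + 1))"

lemma pronic_sum_add:
  "pronic_sum (m + d) = pronic_sum m + pronic_sum d + m * d * (m + d)"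
proof (induction d)
  case 0
  show ?case by (simp add: pronic_sum_def)
next
  case (Suc d)
  then show ?case by (simp add: pronic_sum_def algebra_simps)
qed

lemma prod_add_mult_cong_cubic:
  fixes P :: int and x :: "'a \<Rightarrow> int"
  assumes "finite J"
  shows "\<exists>c1 c2 c3. P dvd c1 \<and> P\<^sup>2 dvd c2 \<and> P ^ 3 dvd c3 \<and>
     (\<forall>t. [(\<Prod>j\<in>J. x j + P * t)
            = (\<Prod>j\<in>J. x j) + c1 * t + c2 * t\<^sup>2 + c3 * t ^ 3] (mod P ^ 4))"
  using assms
proof (induction J rule: finite_induct)
  case empty
  show ?case by (intro exI[of _ 0]) simp
next
  case (insert a J)
  then obtain c1 c2 c3 where c: "P dvd c1" "P\<^sup>2 dvd c2" "P ^ 3 dvd c3"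
    and cong: "\<And>t. [(\<Prod>j\<in>J. x j + P * t)
                      = (\<Prod>j\<in>J. x j) + c1 * t + c2 * t\<^sup>2 + c3 * t ^ 3] (mod P ^ 4)"
    by blast
  define c0 where "c0 = (\<Prod>j\<in>J. x j)"
  show ?case
  proof (intro exI conjI allI)
    show "P dvd x a * c1 + P * c0" using c(1) by simp
    show "P\<^sup>2 dvd x a * c2 + P * c1"
      using c(1,2) by (simp add: power2_eq_square mult_dvd_mono)
    show "P ^ 3 dvd x a * c3 + P * c2"
      using c(2,3) by (simp add: power2_eq_square power3_eq_cube mult_dvd_mono)
    fix t
    have "(\<Prod>j\<in>insert a J. x j + P * t) = (x a + P * t) * (\<Prod>j\<in>J. x j + P * t)"
      using insert.hyps by simp
    also have "[\<dots> = (x a + P * t) * (c0 + c1 * t + c2 * t\<^sup>2 + c3 * t ^ 3)] (mod P ^ 4)"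
      unfolding c0_def using cong by (rule cong_scalar_left)
    also have "(x a + P * t) * (c0 + c1 * t + c2 * t\<^sup>2 + c3 * t ^ 3)
        = x a * c0 + (x a * c1 + P * c0) * t + (x a * c2 + P * c1) * t\<^sup>2
        + (x a * c3 + P * c2) * t ^ 3 + (P * c3) * t ^ 4"
      by (simp add: algebra_simps power2_eq_square power3_eq_cube power4_eq_xxxx)
    also have "[x a * c0 + (x a * c1 + P * c0) * t + (x a * c2 + P * c1) * t\<^sup>2
        + (x a * c3 + P * c2) * t ^ 3 + (P * c3) * t ^ 4
        = x a * c0 + (x a * c1 + P * c0) * t + (x a * c2 + P * c1) * t\<^sup>2
        + (x a * c3 + P * c2) * t ^ 3] (mod P ^ 4)"
    proof -
      obtain k where "c3 = P ^ 3 * k" using c(3) by (auto elim: dvdE)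
      then have "(P * c3) * t ^ 4 = P ^ 4 * (k * t ^ 4)"
        by (simp add: power3_eq_cube power4_eq_xxxx)
      then have "P ^ 4 dvd (P * c3) * t ^ 4" by (metis dvd_triv_left)
      then show ?thesis by (simp add: cong_iff_dvd_diff)
    qed
    finally show "[(\<Prod>j\<in>insert a J. x j + P * t) = (\<Prod>j\<in>insert a J. x j)
        + (x a * c1 + P * c0) * t + (x a * c2 + P * c1) * t\<^sup>2
        + (x a * c3 + P * c2) * t ^ 3] (mod P ^ 4)"
      using insert.hyps by (simp add: c0_def)
  qed
qed

lemma reflection_invariant_cubic_cong:
  fixes M c0 c1 c2 c3 :: int
  defines "f t \<equiv> c0 + c1 * t + c2 * t\<^sup>2 + c3 * t ^ 3"
  assumes "coprime 6 M" "[f (-1) = f 0] (mod M)" "[f (-2) = f 1] (mod M)"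
  shows "M dvd c3" "M dvd c2 - c1"
proof -
  have "f (-1) - f 0 = c2 - c1 - c3" "f (-2) - f 1 = 3 * c2 - 3 * c1 - 9 * c3"
    by (simp_all add: f_def power2_eq_square power3_eq_cube)
  then have d1: "M dvd c2 - c1 - c3" and d2: "M dvd 3 * c2 - 3 * c1 - 9 * c3"
    using assms(3,4) by (simp_all add: cong_iff_dvd_diff)
  have "M dvd 3 * (c2 - c1 - c3) - (3 * c2 - 3 * c1 - 9 * c3)"
    by (rule dvd_diff[OF dvd_mult[OF d1] d2])
  also have "3 * (c2 - c1 - c3) - (3 * c2 - 3 * c1 - 9 * c3) = 6 * c3"
    by simp
  finally have "M dvd 6 * c3" .
  with assms(2) show c3: "M dvd c3"
    by (metis coprime_commute coprime_dvd_mult_right_iff)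
  from dvd_add[OF d1 c3] show "M dvd c2 - c1" by simp
qed

definition block_prod :: "nat \<Rightarrow> int \<Rightarrow> int" where
  "block_prod p t = (\<Prod>j\<in>{1..p - 1}. int j + int p * t)"

lemma block_prod_reflect:
  assumes "odd p"
  shows "block_prod p (- 1 - t) = block_prod p t"
proof -
  have "block_prod p (- 1 - t) = (\<Prod>j\<in>{1..p - 1}. - 1 * (int (p - j) + int p * t))"
    unfolding block_prod_def by (rule prod.cong) (auto simp: algebra_simps of_nat_diff)
  also have "\<dots> = (- 1) ^ (p - 1) * (\<Prod>j\<in>{1..p - 1}. int (p - j) + int p * t)"
    by (simp only: prod.distrib) simp
  also have "(\<Prod>j\<in>{1..p - 1}. int (p - j) + int p * t) = block_prod p t"
    unfolding block_prod_def
    by (rule prod.reindex_bij_witness[of _ "\<lambda>j. p - j" "\<lambda>j. p - j"]) auto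
  finally show ?thesis
    using assms by simp
qed

lemma coprime_block_prod_zero:
  assumes "prime p"
  shows "coprime (block_prod p 0) (int p ^ k)"
proof -
  have "block_prod p 0 = int (fact (p - 1))"
    by (simp add: block_prod_def fact_prod)
  moreover have "\<not> p dvd fact (p - 1)"
    using assms prime_dvd_fact_iff[OF assms] prime_gt_0_nat[OF assms] by auto
  ultimately show ?thesis
    using prime_imp_power_coprime_nat[OF assms] by (metis coprime_int_iff of_nat_power)
qed

lemma block_prod_cong_pronic:
  assumes "prime p" "p \<ge> 5"
  obtains a where "(int p)\<^sup>2 dvd a"
    and "\<And>t. [block_prod p t = block_prod p 0 + a * t * (t + 1)] (mod int p ^ 4)"
proof -
  define P where "P = int p"
  define W where "W = block_prod p 0"
  obtain c1 c2 c3 where c: "P dvd c1" "P\<^sup>2 dvd c2" "P ^ 3 dvd c3"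
    and expand: "\<And>t. [block_prod p t = W + c1 * t + c2 * t\<^sup>2 + c3 * t ^ 3] (mod P ^ 4)"
    using prod_add_mult_cong_cubic[of "{1..p - 1}" P int]
    unfolding block_prod_def W_def P_def by auto
  define f where "f t = W + c1 * t + c2 * t\<^sup>2 + c3 * t ^ 3" for t
  have "odd p" using assms prime_odd_nat by fastforce
  then have "block_prod p (-1) = block_prod p 0" "block_prod p (-2) = block_prod p 1"
    using block_prod_reflect[of p 0] block_prod_reflect[of p 1] by simp_all
  moreover have "[f t = block_prod p t] (mod P ^ 4)" for t
    unfolding f_def using expand by (rule cong_sym)
  ultimately have "[f (-1) = f 0] (mod P ^ 4)" "[f (-2) = f 1] (mod P ^ 4)"
    by (metis cong_sym cong_trans)+
  then have "P ^ 4 dvd c3" "P ^ 4 dvd c2 - c1"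
    using reflection_invariant_cubic_cong coprime_small_prime_power(2)[OF assms]
    unfolding f_def P_def by blast+
  then have "P ^ 4 dvd c3 * t ^ 3 - (c2 - c1) * t" for t
    by (simp add: dvd_diff dvd_mult2)
  moreover have "W + c1 * t + c2 * t\<^sup>2 + c3 * t ^ 3 - (W + c2 * t * (t + 1))
      = c3 * t ^ 3 - (c2 - c1) * t" for t
    by (simp add: algebra_simps power2_eq_square)
  ultimately have "[W + c1 * t + c2 * t\<^sup>2 + c3 * t ^ 3 = W + c2 * t * (t + 1)] (mod P ^ 4)" for t
    by (simp only: cong_iff_dvd_diff)
  with expand have "[block_prod p t = W + c2 * t * (t + 1)] (mod P ^ 4)" for t
    by (rule cong_trans)
  with c(2) show thesis
    using that unfolding W_def P_def by blast
qed

lemma block_prod_cong: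
  assumes "prime p" "p \<ge> 5"
  obtains c where "(int p)\<^sup>2 dvd c"
    and "\<And>t. [block_prod p t = block_prod p 0 * (1 + c * t * (t + 1))] (mod int p ^ 4)"
proof -
  define M where "M = int p ^ 4"
  define W where "W = block_prod p 0"
  obtain a where a: "(int p)\<^sup>2 dvd a"
    and pronic: "\<And>t. [block_prod p t = W + a * t * (t + 1)] (mod M)"
    using block_prod_cong_pronic[OF assms] unfolding W_def M_def by blast
  obtain u where u: "[W * u = 1] (mod M)"
    using cong_solve_coprime_int coprime_block_prod_zero[OF assms(1)] unfolding W_def M_def by blast
  show thesis
  proof
    show "(int p)\<^sup>2 dvd a * u" using a by simp
    fix t
    have "[block_prod p t = W + a * t * (t + 1)] (mod M)" by (rule pronic)
    also have "[W + a * t * (t + 1) = W + (W * u) * (a * t * (t + 1))] (mod M)"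
      using cong_scalar_right[OF cong_sym[OF u], of "a * t * (t + 1)"]
      by (simp add: cong_add_lcancel)
    finally show "[block_prod p t = block_prod p 0 * (1 + a * u * t * (t + 1))] (mod int p ^ 4)"
      unfolding W_def M_def by (simp add: algebra_simps)
  qed
qed

lemma fact_add_eq_fact_mult_prod:
  "(fact (a + b) :: 'a :: {semiring_char_0, comm_semiring_1})
     = fact a * (\<Prod>j\<in>{1..b}. of_nat (a + j))"
proof (induction b)
  case 0
  show ?case by simp
next
  case (Suc b)
  then show ?case by (simp add: prod.cl_ivl_Suc algebra_simps)
qed

definition pfree_fact :: "nat \<Rightarrow> nat \<Rightarrow> int" where
  "pfree_fact p n = (\<Prod>k<n. block_prod p (int k))"

lemma fact_mult_prime_eq:
  assumes "p \<ge> 1"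
  shows "(fact (n * p) :: int) = int p ^ n * fact n * pfree_fact p n"
proof (induction n)
  case 0
  show ?case by (simp add: pfree_fact_def)
next
  case (Suc n)
  obtain q where q: "p = Suc q" using assms by (cases p) auto
  have "(fact (Suc n * p) :: int) = fact (n * p) * (\<Prod>j\<in>{1..p}. int (n * p + j))"
    using fact_add_eq_fact_mult_prod[of "n * p" p] by (simp add: add.commute)
  also have "(\<Prod>j\<in>{1..p}. int (n * p + j)) = block_prod p (int n) * (int p * int (Suc n))"
    unfolding q block_prod_def by (simp add: prod.cl_ivl_Suc algebra_simps)
  finally show ?case
    using Suc.IH by (simp add: pfree_fact_def algebra_simps)
qed

lemma binomial_mult_prime_eq:
  assumes "p \<ge> 1" "m \<le> n"
  shows "int ((n * p) choose (m * p)) * pfree_fact p m * pfree_fact p (n - m)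
       = int (n choose m) * pfree_fact p n"
proof -
  obtain d where n: "n = m + d" using assms(2) by (metis le_add_diff_inverse)
  define B where "B = int ((n * p) choose (m * p))"
  define C where "C = int (n choose m)"
  define u :: int where "u = int p ^ m * int p ^ d * fact m * fact d"
  have "int (fact (m * p) * fact (d * p) * ((n * p) choose (m * p))) = int (fact (n * p))"
    using binomial_fact_lemma[of "m * p" "n * p"] by (simp add: n algebra_simps)
  then have fact_np: "fact (m * p) * fact (d * p) * B = (fact (n * p) :: int)"
    unfolding B_def by (simp only: of_nat_mult of_nat_fact)
  have "int (fact m * fact d * (n choose m)) = int (fact n)"
    using binomial_fact_lemma[of m n] by (simp add: n)
  then have fact_n: "fact m * fact d * C = (fact n :: int)"
    unfolding C_def by (simp only: of_nat_mult of_nat_fact)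
  have "u * (B * pfree_fact p m * pfree_fact p d)
      = (int p ^ m * fact m * pfree_fact p m) * (int p ^ d * fact d * pfree_fact p d) * B"
    by (simp add: u_def ac_simps)
  also have "\<dots> = int p ^ n * fact n * pfree_fact p n"
    using fact_np unfolding fact_mult_prime_eq[OF assms(1)] .
  also have "\<dots> = u * (C * pfree_fact p n)"
    by (subst fact_n[symmetric]) (simp add: u_def n power_add ac_simps)
  finally have "u * (B * pfree_fact p m * pfree_fact p d) = u * (C * pfree_fact p n)" .
  moreover have "u \<noteq> 0" using assms(1) by (simp add: u_def)
  ultimately show ?thesis
    unfolding B_def C_def by (simp add: n)
qed

lemma pfree_fact_cong:
  assumes "prime p" "p \<ge> 5"
  obtains c where "(int p)\<^sup>2 dvd c"
    and "\<And>n. [pfree_fact p n = block_prod p 0 ^ n * (1 + c * int (pronic_sum n))] (mod int p ^ 4)"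
proof -
  obtain c where c: "(int p)\<^sup>2 dvd c"
    and block: "\<And>t. [block_prod p t = block_prod p 0 * (1 + c * t * (t + 1))] (mod int p ^ 4)"
    using block_prod_cong[OF assms] by blast
  have sq: "int p ^ 4 dvd c\<^sup>2"
    using dvd_power_same[OF c, of 2] by (simp flip: power_mult)
  show thesis
  proof (rule that[OF c])
    fix n
    have pronic_sum_int: "int (pronic_sum n) = (\<Sum>k<n. int k * (int k + 1))"
      by (simp add: pronic_sum_def algebra_simps)
    have "[pfree_fact p n
        = (\<Prod>k<n. block_prod p 0 * (1 + c * (int k * (int k + 1))))] (mod int p ^ 4)"
      unfolding pfree_fact_def using block by (intro cong_prod) (simp add: mult.assoc)
    also have "(\<Prod>k<n. block_prod p 0 * (1 + c * (int k * (int k + 1))))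
        = block_prod p 0 ^ n * (\<Prod>k<n. 1 + c * (int k * (int k + 1)))"
      by (simp add: prod.distrib)
    also have "[block_prod p 0 ^ n * (\<Prod>k<n. 1 + c * (int k * (int k + 1)))
        = block_prod p 0 ^ n * (1 + c * int (pronic_sum n))] (mod int p ^ 4)"
      unfolding pronic_sum_int by (intro cong_scalar_left cong_prod_one_plus[OF sq]) simp
    finally show "[pfree_fact p n = block_prod p 0 ^ n * (1 + c * int (pronic_sum n))] (mod int p ^ 4)" .
  qed
qed

lemma cong_one_plus_shift:
  fixes B C c x w :: int
  assumes "M dvd c\<^sup>2" "coprime (1 + c * (x + w)) M"
    and "[B * (1 + c * x) = C * (1 + c * (x + w))] (mod M)"
  shows "[B = C * (1 + c * w)] (mod M)"
proof -
  have "[B * (1 + c * (x + w)) = B * ((1 + c * x) * (1 + c * w))] (mod M)"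
    by (intro cong_scalar_left cong_sym[OF cong_one_plus_mult[OF assms(1)]])
  also have "B * ((1 + c * x) * (1 + c * w)) = B * (1 + c * x) * (1 + c * w)"
    by (simp add: ac_simps)
  also have "[B * (1 + c * x) * (1 + c * w) = C * (1 + c * (x + w)) * (1 + c * w)] (mod M)"
    using assms(3) by (rule cong_scalar_right)
  finally have "[(1 + c * (x + w)) * B = (1 + c * (x + w)) * (C * (1 + c * w))] (mod M)"
    by (simp add: ac_simps)
  with assms(2) show ?thesis
    by (simp add: cong_mult_lcancel)
qed

lemma binomial_mult_prime_cong_pronic:
  assumes "prime p" "(int p)\<^sup>2 dvd c" "m \<le> n"
    and pfree: "\<And>n. [pfree_fact p n = block_prod p 0 ^ n * (1 + c * int (pronic_sum n))] (mod int p ^ 4)"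
  shows "[int ((n * p) choose (m * p)) * (1 + c * int (pronic_sum m + pronic_sum (n - m)))
        = int (n choose m) * (1 + c * int (pronic_sum n))] (mod int p ^ 4)"
proof -
  obtain d where n: "n = m + d" using assms(3) by (metis le_add_diff_inverse)
  define M where "M = int p ^ 4"
  define W where "W = block_prod p 0"
  define B where "B = int ((n * p) choose (m * p))"
  define C where "C = int (n choose m)"
  define x where "x = int (pronic_sum m)"
  define y where "y = int (pronic_sum d)"
  define z where "z = int (pronic_sum n)"
  have pfree': "[W ^ k * (1 + c * int (pronic_sum k)) = pfree_fact p k] (mod M)" for k
    using pfree unfolding W_def M_def by (rule cong_sym)
  have "W ^ n * (B * ((1 + c * x) * (1 + c * y)))
      = B * (W ^ m * (1 + c * x)) * (W ^ d * (1 + c * y))"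
    by (simp add: n power_add ac_simps)
  also have "[\<dots> = B * pfree_fact p m * pfree_fact p d] (mod M)"
    unfolding x_def y_def by (intro cong_mult cong_refl pfree')
  also have "B * pfree_fact p m * pfree_fact p d = C * pfree_fact p n"
    using binomial_mult_prime_eq[of p m n] prime_gt_0_nat[OF assms(1)] assms(3)
    unfolding B_def C_def n by simp
  also have "[C * pfree_fact p n = C * (W ^ n * (1 + c * z))] (mod M)"
    unfolding z_def by (intro cong_mult cong_refl cong_sym[OF pfree'])
  also have "C * (W ^ n * (1 + c * z)) = W ^ n * (C * (1 + c * z))"
    by (simp add: ac_simps)
  finally have "[B * ((1 + c * x) * (1 + c * y)) = C * (1 + c * z)] (mod M)"
    using coprime_block_prod_zero[OF assms(1)] unfolding M_def W_def
    by (simp add: cong_mult_lcancel)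
  moreover have "M dvd c\<^sup>2"
    using dvd_power_same[OF assms(2), of 2] by (simp add: M_def flip: power_mult)
  then have "[B * ((1 + c * x) * (1 + c * y)) = B * (1 + c * (x + y))] (mod M)"
    by (intro cong_scalar_left cong_one_plus_mult)
  ultimately have "[B * (1 + c * (x + y)) = C * (1 + c * z)] (mod M)"
    using cong_sym cong_trans by blast
  then show ?thesis
    unfolding B_def C_def x_def y_def z_def M_def n by simp
qed

lemma binomial_mult_prime_cong:
  assumes "prime p" "p \<ge> 5"
  obtains b where "(int p)\<^sup>2 dvd b"
    and "\<And>n m. [int ((n * p) choose (m * p))
                 = int (n choose m) * (1 + b * int (m * n * (n - m)))] (mod int p ^ 4)"
proof -
  obtain c where c: "(int p)\<^sup>2 dvd c"
    and pfree: "\<And>n. [pfree_fact p n = block_prod p 0 ^ n * (1 + c * int (pronic_sum n))] (mod int p ^ 4)"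
    using pfree_fact_cong[OF assms] by blast
  have sq: "int p ^ 4 dvd c\<^sup>2"
    using dvd_power_same[OF c, of 2] by (simp flip: power_mult)
  have "int p dvd c"
    using c by (rule dvd_trans[rotated]) simp
  then have unit: "coprime (1 + c * x) (int p ^ 4)" for x
    using coprime_one_plus_multiple by simp
  show thesis
  proof (rule that[OF c])
    fix n m
    show "[int ((n * p) choose (m * p))
          = int (n choose m) * (1 + c * int (m * n * (n - m)))] (mod int p ^ 4)"
    proof (cases "m \<le> n")
      case False
      then show ?thesis using assms by (simp add: binomial_eq_0)
    next
      case True
      then have "int (pronic_sum n)
          = int (pronic_sum m + pronic_sum (n - m)) + int (m * n * (n - m))"
        using pronic_sum_add[of m "n - m"] by simp
      with binomial_mult_prime_cong_pronic[OF assms(1) c True pfree]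
      have "[int ((n * p) choose (m * p)) * (1 + c * int (pronic_sum m + pronic_sum (n - m)))
          = int (n choose m) * (1 + c * (int (pronic_sum m + pronic_sum (n - m))
              + int (m * n * (n - m))))] (mod int p ^ 4)"
        by simp
      then show ?thesis
        by (rule cong_one_plus_shift[OF sq unit])
    qed
  qed
qed

lemma wolstenholme_iff_binomial_mult_prime_cong:
  assumes "prime p" "p \<ge> 5"
  shows "[(2 * p) choose p = 2] (mod p ^ 4)
     \<longleftrightarrow> (\<forall>n m. [(n * p) choose (m * p) = n choose m] (mod p ^ 4))"
proof
  assume "\<forall>n m. [(n * p) choose (m * p) = n choose m] (mod p ^ 4)"
  then have "[(2 * p) choose (1 * p) = 2 choose 1] (mod p ^ 4)"
    by blast
  then show "[(2 * p) choose p = 2] (mod p ^ 4)"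
    by simp
next
  assume wolstenholme: "[(2 * p) choose p = 2] (mod p ^ 4)"
  obtain b where key: "\<And>n m. [int ((n * p) choose (m * p))
      = int (n choose m) * (1 + b * int (m * n * (n - m)))] (mod int p ^ 4)"
    using binomial_mult_prime_cong[OF assms] by blast
  have "[int ((2 * p) choose p) = 2] (mod int p ^ 4)"
    using wolstenholme by (simp flip: cong_int_iff)
  moreover have "[int ((2 * p) choose p) = 2 * (1 + b * 2)] (mod int p ^ 4)"
    using key[of 2 1] by simp
  ultimately have "[2 = 2 * (1 + b * 2)] (mod int p ^ 4)"
    using cong_sym cong_trans by blast
  then have "int p ^ 4 dvd 4 * b"
    by (simp add: cong_iff_dvd_diff algebra_simps)
  then have b: "int p ^ 4 dvd b"
    using coprime_small_prime_power(1)[OF assms] by (metis coprime_commute coprime_dvd_mult_right_iff)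
  show "\<forall>n m. [(n * p) choose (m * p) = n choose m] (mod p ^ 4)"
  proof (intro allI)
    fix n m
    have "[int (n choose m) * (1 + b * int (m * n * (n - m))) = int (n choose m)] (mod int p ^ 4)"
      using b by (intro cong_mult_one_plus_dvd dvd_mult2)
    with key have "[int ((n * p) choose (m * p)) = int (n choose m)] (mod int p ^ 4)"
      by (rule cong_trans)
    then show "[(n * p) choose (m * p) = n choose m] (mod p ^ 4)"
      by (simp flip: cong_int_iff)
  qed
qed

lemma binomial_mult_prime_power_cong:
  assumes "prime p" "p \<ge> 5" "k \<ge> 1"
  shows "[(n * p ^ k) choose (m * p ^ k) = (n * p) choose (m * p)] (mod p ^ 4)"
  using assms(3)
proof (induction k rule: nat_induct_at_least)
  case base
  show ?case by simp
next
  case (Suc k)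
  obtain b where b: "(int p)\<^sup>2 dvd b"
    and key: "\<And>n m. [int ((n * p) choose (m * p))
      = int (n choose m) * (1 + b * int (m * n * (n - m)))] (mod int p ^ 4)"
    using binomial_mult_prime_cong[OF assms(1,2)] by blast
  define n' where "n' = n * p ^ k"
  define m' where "m' = m * p ^ k"
  have "n' - m' = (n - m) * p ^ k"
    by (simp add: n'_def m'_def diff_mult_distrib)
  then have "m' * n' * (n' - m') = (p ^ k) ^ 3 * (m * n * (n - m))"
    by (simp add: n'_def m'_def power3_eq_cube ac_simps)
  then have scaled: "int (m' * n' * (n' - m')) = int (p ^ k) ^ 3 * int (m * n * (n - m))"
    by (simp only: of_nat_mult of_nat_power)
  have "(int p)\<^sup>2 dvd int p ^ (k * 3)"
    using Suc.hyps by (intro le_imp_power_dvd) simp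
  then have "(int p)\<^sup>2 * (int p)\<^sup>2 dvd b * int (p ^ k) ^ 3"
    using b by (intro mult_dvd_mono) (simp_all add: power_mult)
  then have "int p ^ 4 dvd b * int (m' * n' * (n' - m'))"
    unfolding scaled mult.assoc[symmetric] by (simp add: dvd_mult2 flip: power_add)
  then have "[int (n' choose m') * (1 + b * int (m' * n' * (n' - m')))
      = int (n' choose m')] (mod int p ^ 4)"
    by (rule cong_mult_one_plus_dvd)
  with key have "[int ((n' * p) choose (m' * p)) = int (n' choose m')] (mod int p ^ 4)"
    by (rule cong_trans)
  then have "[(n' * p) choose (m' * p) = n' choose m'] (mod p ^ 4)"
    by (simp flip: cong_int_iff)
  with Suc.IH show ?case
    unfolding n'_def m'_def by (simp add: ac_simps cong_trans)
qed

lemma not_prime_dvd_near_multiple: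
  fixes p K k :: nat
  assumes "prime p" "p dvd K" "k \<noteq> K" "k < K + p" "K < k + p"
  shows "\<not> p dvd k"
proof
  assume "p dvd k"
  with assms(2) have "int p dvd int k - int K"
    by (simp add: dvd_diff)
  moreover have "int k - int K \<noteq> 0"
    using assms(3) by simp
  ultimately have "\<bar>int p\<bar> \<le> \<bar>int k - int K\<bar>"
    by (rule dvd_imp_le_int[rotated])
  with assms(4,5) show False
    by linarith
qed

lemma prime_power_dvd_binomial:
  fixes p N k :: nat
  assumes "prime p" "p ^ e dvd N" "\<not> p dvd k"
  shows "p ^ e dvd N choose k"
proof -
  obtain j where k: "k = Suc j"
    using assms(3) by (cases k) auto
  have "k * (N choose k) = N * ((N - 1) choose j)"
    unfolding k by (rule binomial_absorption)
  then have "p ^ e dvd k * (N choose k)"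
    using assms(2) by simp
  moreover have "coprime (p ^ e) k"
    using prime_imp_power_coprime_nat[OF assms(1,3)] by (simp add: coprime_commute)
  ultimately show ?thesis
    by (simp add: coprime_dvd_mult_right_iff)
qed

lemma binomial_add_less_prime_cong:
  fixes p N K n0 m0 :: nat
  assumes "prime p" "p ^ e dvd N" "p dvd K" "n0 < p" "m0 < p"
  shows "[(N + n0) choose (K + m0) = (N choose K) * (n0 choose m0)] (mod p ^ e)"
proof -
  define f where "f k = (N choose k) * (n0 choose (K + m0 - k))" for k
  have "(N + n0) choose (K + m0) = f K + (\<Sum>k\<in>{..K + m0} - {K}. f k)"
    using vandermonde[of N n0 "K + m0"] sum.remove[of "{..K + m0}" K f]
    unfolding f_def by simp
  moreover have "p ^ e dvd f k" if k: "k \<in> {..K + m0} - {K}" for k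
  proof (cases "K + m0 - k \<le> n0")
    case False
    then show ?thesis by (simp add: f_def binomial_eq_0)
  next
    case True
    then have "\<not> p dvd k"
      using k assms by (intro not_prime_dvd_near_multiple[OF assms(1,3)]) auto
    then show ?thesis
      unfolding f_def using prime_power_dvd_binomial[OF assms(1,2)] by simp
  qed
  then have "[(\<Sum>k\<in>{..K + m0} - {K}. f k) = 0] (mod p ^ e)"
    unfolding cong_0_iff by (rule dvd_sum)
  ultimately show ?thesis
    using cong_add_lcancel_0_nat unfolding f_def by simp
qed

lemma binomial_mult_prime_power_four_add_cong:
  assumes "prime p" "p \<ge> 5" "n0 < p" "m0 < p"
  shows "[(n * p ^ 4 + n0) choose (m * p ^ 4 + m0)
        = ((n * p) choose (m * p)) * (n0 choose m0)] (mod p ^ 4)"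
proof -
  have "[(n * p ^ 4 + n0) choose (m * p ^ 4 + m0)
      = ((n * p ^ 4) choose (m * p ^ 4)) * (n0 choose m0)] (mod p ^ 4)"
    using assms by (intro binomial_add_less_prime_cong) auto
  also have "[((n * p ^ 4) choose (m * p ^ 4)) * (n0 choose m0)
      = ((n * p) choose (m * p)) * (n0 choose m0)] (mod p ^ 4)"
    using binomial_mult_prime_power_cong[OF assms(1,2)] by (intro cong_scalar_right) simp
  finally show ?thesis .
qed

theorem mainTheorem3:
  fixes p :: nat
  assumes "prime p" and "p \<ge> 5"
  shows "([(2 * p) choose p = 2] (mod p ^ 4)
           \<longleftrightarrow> (\<forall>n m :: nat. [(n * p) choose (m * p) = n choose m] (mod p ^ 4)))
       \<and> ([(2 * p) choose p = 2] (mod p ^ 4)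
           \<longleftrightarrow> (\<forall>n m n0 m0 :: nat. n0 < p \<longrightarrow> m0 < p \<longrightarrow>
                 [(n * p ^ 4 + n0) choose (m * p ^ 4 + m0) = (n choose m) * (n0 choose m0)] (mod p ^ 4)))"
proof -
  note digits = binomial_mult_prime_power_four_add_cong[OF assms]
  have "[(n * p ^ 4 + n0) choose (m * p ^ 4 + m0) = (n choose m) * (n0 choose m0)] (mod p ^ 4)"
    if "\<forall>n m. [(n * p) choose (m * p) = n choose m] (mod p ^ 4)" "n0 < p" "m0 < p" for n m n0 m0
    using digits[of n0 m0 n m] that cong_scalar_right cong_trans by blast
  moreover have "[(2 * p) choose p = 2] (mod p ^ 4)"
    if "\<forall>n m n0 m0. n0 < p \<longrightarrow> m0 < p \<longrightarrow>
          [(n * p ^ 4 + n0) choose (m * p ^ 4 + m0) = (n choose m) * (n0 choose m0)] (mod p ^ 4)"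
  proof -
    have "0 < p" using assms by simp
    with that have "[(2 * p ^ 4 + 0) choose (1 * p ^ 4 + 0) = (2 choose 1) * (0 choose 0)] (mod p ^ 4)"
      by blast
    with digits[OF \<open>0 < p\<close> \<open>0 < p\<close>, of 2 1]
    have "[((2 * p) choose (1 * p)) * (0 choose 0) = (2 choose 1) * (0 choose 0)] (mod p ^ 4)"
      by (rule cong_trans[OF cong_sym])
    then show ?thesis by simp
  qed
  ultimately show ?thesis
    using wolstenholme_iff_binomial_mult_prime_cong[OF assms] by blast
qed

end
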